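(* There exists a computable (2,1):1 structure $\mathcal{A}=(\omega,f)$ with no $\mathbb{Z}$-chains such that $\beta_{\mathcal{A}}$ and $iso_{\mathcal{A}}$ are computable, but $\mathcal{A}$ is not computably categorical; that is, there is a computable (2,1):1 structure $\mathcal{B}=(\omega,g)$ isomorphic to $\mathcal{A}$ such that no computable function is an isomorphism from $\mathcal{A}$ onto $\mathcal{B}$. (Necessarily such $\mathcal{A}$ has infinitely many $k$-cycles for some $k$; the example given consists entirely of $1$-cycles.)
   Context: A (2,1):1 structure is a pair $\mathcal{A}=(A,f)$ with $A$ a countable set and $f:A\to A$ such that $|f^{-1}(a)|\in\{1,2\}$ for every $a\in A$; it is computable if $A$ is a computable set and $f$ is computable. An element $x$ is cyclic if $f^n(x)=x$ for some $n>0$. The orbit of $x$ is $\{y:\exists m,n\ (f^m(x)=f^n(y))\}$. An orbit containing a directed cycle with exactly $k$ elements is a $k$-cycle; an orbit containing no cyclic element is a $\mathbb{Z}$-chain. The branching function is $\beta_{\mathcal{A}}(x)=|f^{-1}(x)|\in\{1,2\}$ and $\Lambda_{\mathcal{A}}=\{x:\beta_{\mathcal{A}}(x)=2\}$. For $x\in A$, $Tree_{\mathcal{A}}(x)$ is the directed graph with vertex set $\{a:\exists n\ge0\,(f^n(a)=x)\}$ and edges $(a,f(a))$ between such vertices. The branch isomorphism function $iso_{\mathcal{A}}:\Lambda_{\mathcal{A}}\to\{0,1\}$ is given, for $x\in\Lambda_{\mathcal{A}}$ with distinct pre-images $x_1,x_2$, by $iso_{\mathcal{A}}(x)=1$ iff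 $Tree_{\mathcal{A}}(x_1)\cong Tree_{\mathcal{A}}(x_2)$; it is computable if it is the restriction to $\Lambda_{\mathcal{A}}$ of a partial computable function. A computable structure is computably categorical if any two computable structures isomorphic to it are computably isomorphic. *)

theory Defs
  imports Main
begin

datatype recf = Zero | Succ | Proj nat | Comp recf "recf list" | Prim recf recf | Mu recf

inductive eval :: "recf \<Rightarrow> nat list \<Rightarrow> nat \<Rightarrow> bool" where
  eval_Zero: "eval Zero xs 0"
| eval_Succ: "eval Succ (x # xs) (Suc x)"
| eval_Proj: "i < length xs \<Longrightarrow> eval (Proj i) xs (xs ! i)"
| eval_Comp: "list_all2 (\<lambda>g y. eval g xs y) gs ys \<Longrightarrow> eval f ys z \<Longrightarrow> eval (Comp f gs) xs z"
| eval_Prim0: "eval g xs z \<Longrightarrow> eval (Prim g h) (0 # xs) z"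
| eval_PrimS: "eval (Prim g h) (n # xs) y \<Longrightarrow> eval h (y # n # xs) z
     \<Longrightarrow> eval (Prim g h) (Suc n # xs) z"
| eval_Mu: "eval f (n # xs) 0 \<Longrightarrow> (\<forall>m<n. \<exists>y. eval f (m # xs) (Suc y))
     \<Longrightarrow> eval (Mu f) xs n"

definition computable :: "(nat \<Rightarrow> nat) \<Rightarrow> bool" where
  "computable F \<longleftrightarrow> (\<exists>c. \<forall>x. eval c [x] (F x))"

definition computable_on :: "nat set \<Rightarrow> (nat \<Rightarrow> nat) \<Rightarrow> bool" where
  "computable_on S F \<longleftrightarrow> (\<exists>c. \<forall>x\<in>S. eval c [x] (F x))"

definition is_21_1 :: "(nat \<Rightarrow> nat) \<Rightarrow> bool" where
  "is_21_1 f \<longleftrightarrow> (\<forall>a. card (f -` {a}) \<in> {1, 2})"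

definition cyclic :: "(nat \<Rightarrow> nat) \<Rightarrow> nat \<Rightarrow> bool" where
  "cyclic f x \<longleftrightarrow> (\<exists>n>0. (f ^^ n) x = x)"

definition orbit :: "(nat \<Rightarrow> nat) \<Rightarrow> nat \<Rightarrow> nat set" where
  "orbit f x = {y. \<exists>m n. (f ^^ m) x = (f ^^ n) y}"

text \<open>No orbit is a Z-chain, i.e. every orbit contains a cyclic element.\<close>
definition no_Z_chains :: "(nat \<Rightarrow> nat) \<Rightarrow> bool" where
  "no_Z_chains f \<longleftrightarrow> (\<forall>x. \<exists>y\<in>orbit f x. cyclic f y)"

definition branching :: "(nat \<Rightarrow> nat) \<Rightarrow> nat \<Rightarrow> nat" where
  "branching f x = card (f -` {x})"

definition Lambda :: "(nat \<Rightarrow> nat) \<Rightarrow> nat set" where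
  "Lambda f = {x. branching f x = 2}"

definition tree_verts :: "(nat \<Rightarrow> nat) \<Rightarrow> nat \<Rightarrow> nat set" where
  "tree_verts f x = {a. \<exists>n. (f ^^ n) a = x}"

definition tree_edges :: "(nat \<Rightarrow> nat) \<Rightarrow> nat \<Rightarrow> (nat \<times> nat) set" where
  "tree_edges f x = {(a, f a) | a. a \<in> tree_verts f x \<and> f a \<in> tree_verts f x}"

definition tree_iso :: "(nat \<Rightarrow> nat) \<Rightarrow> nat \<Rightarrow> nat \<Rightarrow> bool" where
  "tree_iso f x1 x2 \<longleftrightarrow> (\<exists>h. bij_betw h (tree_verts f x1) (tree_verts f x2) \<and>
     (\<forall>a\<in>tree_verts f x1. \<forall>b\<in>tree_verts f x1.
        (a, b) \<in> tree_edges f x1 \<longleftrightarrow> (h a, h b) \<in> tree_edges f x2))"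

text \<open>Branch isomorphism function (meaningful on Lambda f).\<close>
definition iso_fun :: "(nat \<Rightarrow> nat) \<Rightarrow> nat \<Rightarrow> nat" where
  "iso_fun f x = (if \<exists>x1 x2. x1 \<noteq> x2 \<and> f x1 = x \<and> f x2 = x \<and> tree_iso f x1 x2 then 1 else 0)"

definition struct_iso :: "(nat \<Rightarrow> nat) \<Rightarrow> (nat \<Rightarrow> nat) \<Rightarrow> (nat \<Rightarrow> nat) \<Rightarrow> bool" where
  "struct_iso f g h \<longleftrightarrow> bij h \<and> (\<forall>x. h (f x) = g (h x))"

end

theory Submission
  imports Defs "HOL-Library.Nat_Bijection" "HOL-Library.Infinite_Set"
begin

text \<open>
  Both structures consist of 1-cycles only: infinitely many bare fixed points, and infinitely
  many fixed points each carrying a single \<omega>-chain. Any two such structures are isomorphic,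
  by matching the bare points and the roots of the chains and extending level by level.

  The computable structure A starts with bare points 2j and chains ending in node_E j 0.
  The second structure B is obtained from A by a computable schedule that may, at some stage,
  cut the upper part of the chain of node_E j 0 off and attach it to 2j; node_E j 0 keeps an
  infinite chain, so nothing changes up to isomorphism as long as infinitely many 2j stay
  bare. The schedule defeats every program e: an isomorphism maps bare points to bare points,
  so once e has halted on the inputs 2i with i \<le> 2e, one of its values 2j with j \<ge> 2e is given
  a chain. Computations are run on a step-counting interpreter for the programs of recf,
  of which only completeness is needed.\<close>

section \<open>Arithmetic programs\<close>

lemma eval_Comp_single: "eval g xs y \<Longrightarrow> eval f [y] z \<Longrightarrow> eval (Comp f [g]) xs z"
  by (rule eval_Comp[where ys = "[y]"]) auto

lemma eval_Comp_pair:
  "eval g1 xs y1 \<Longrightarrow> eval g2 xs y2 \<Longrightarrow> eval f [y1, y2] z \<Longrightarrow> eval (Comp f [g1, g2]) xs z"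
  by (rule eval_Comp[where ys = "[y1, y2]"]) auto

lemma eval_Proj0: "eval (Proj 0) (x # xs) x"
  and eval_Proj1: "eval (Proj 1) (x # y # xs) y"
  and eval_Proj2: "eval (Proj 2) (x # y # z # xs) z"
  using eval_Proj[of 0 "x # xs"] eval_Proj[of 1 "x # y # xs"] eval_Proj[of 2 "x # y # z # xs"]
  by simp_all

lemma eval_ProjI: "i < length xs \<Longrightarrow> xs ! i = y \<Longrightarrow> eval (Proj i) xs y"
  using eval_Proj by blast

primrec const_prog :: "nat \<Rightarrow> recf" where
  "const_prog 0 = Zero"
| "const_prog (Suc k) = Comp Succ [const_prog k]"

lemma eval_const_prog: "eval (const_prog k) xs k"
  by (induction k) (auto intro: eval.intros eval_Comp_single)

definition add_prog :: recf where "add_prog = Prim (Proj 0) (Comp Succ [Proj 0])"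

lemma eval_add_prog: "eval add_prog [n, x] (n + x)"
  unfolding add_prog_def
proof (induction n)
  case 0 then show ?case by (auto intro: eval_Prim0 eval_Proj0)
next
  case (Suc n)
  then show ?case by (auto intro!: eval_PrimS eval_Comp_single eval_Proj0 eval_Succ)
qed

definition pred_prog :: recf where "pred_prog = Prim Zero (Proj 1)"

lemma eval_pred_prog: "eval pred_prog [n] (n - 1)"
  unfolding pred_prog_def
proof (induction n)
  case 0 then show ?case by (auto intro: eval_Prim0 eval_Zero)
next
  case (Suc n) then show ?case by (auto intro!: eval_PrimS eval_ProjI)
qed

definition diff_prog :: recf where "diff_prog = Prim (Proj 0) (Comp pred_prog [Proj 0])"

lemma eval_diff_prog: "eval diff_prog [n, x] (x - n)"
  unfolding diff_prog_def
proof (induction n)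
  case 0 then show ?case by (auto intro: eval_Prim0 eval_Proj0)
next
  case (Suc n)
  have "eval (Comp pred_prog [Proj 0]) [x - n, n, x] (x - Suc n)"
    using eval_Comp_single[OF eval_Proj0 eval_pred_prog, of "x - n" "[n, x]"] by simp
  with Suc show ?case by (auto intro!: eval_PrimS)
qed

definition mult_prog :: recf where "mult_prog = Prim Zero (Comp add_prog [Proj 0, Proj 2])"

lemma eval_mult_prog: "eval mult_prog [n, x] (n * x)"
  unfolding mult_prog_def
proof (induction n)
  case 0 then show ?case by (auto intro: eval_Prim0 eval_Zero)
next
  case (Suc n)
  have "eval (Comp add_prog [Proj 0, Proj 2]) [n * x, n, x] (n * x + x)"
    by (rule eval_Comp_pair[OF eval_Proj0 eval_Proj2 eval_add_prog])
  with Suc show ?case by (auto intro!: eval_PrimS simp: add.commute)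
qed

definition triangle_prog :: recf
  where "triangle_prog = Prim Zero (Comp add_prog [Proj 0, Comp Succ [Proj 1]])"

lemma eval_triangle_prog: "eval triangle_prog [n] (triangle n)"
  unfolding triangle_prog_def
proof (induction n)
  case 0 then show ?case by (auto intro: eval_Prim0 eval_Zero)
next
  case (Suc n)
  have "eval (Comp add_prog [Proj 0, Comp Succ [Proj 1]]) [triangle n, n] (triangle n + Suc n)"
    by (rule eval_Comp_pair[OF eval_Proj0 eval_Comp_single[OF eval_Proj1 eval_Succ] eval_add_prog])
  with Suc show ?case by (auto intro!: eval_PrimS)
qed

lemma eval_Mu_Least:
  assumes "\<And>a b. eval p [a, b] (T a b)" and "\<exists>n. T n x = 0"
  shows "eval (Mu p) [x] (LEAST n. T n x = 0)"
proof (rule eval_Mu)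
  show "eval p [(LEAST n. T n x = 0), x] 0"
    using assms(1)[of "LEAST n. T n x = 0" x] LeastI_ex[OF assms(2)] by simp
  show "\<forall>m < (LEAST n. T n x = 0). \<exists>y. eval p [m, x] (Suc y)"
  proof (intro allI impI)
    fix m assume "m < (LEAST n. T n x = 0)"
    then have "T m x \<noteq> 0" by (rule not_less_Least)
    then show "\<exists>y. eval p [m, x] (Suc y)" using assms(1)[of m x] by (metis not0_implies_Suc)
  qed
qed

definition npair :: "nat \<Rightarrow> nat \<Rightarrow> nat" where "npair a b = prod_encode (a, b)"
definition nfst :: "nat \<Rightarrow> nat" where "nfst z = fst (prod_decode z)"
definition nsnd :: "nat \<Rightarrow> nat" where "nsnd z = snd (prod_decode z)"

lemma nfst_npair [simp]: "nfst (npair a b) = a"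
  and nsnd_npair [simp]: "nsnd (npair a b) = b"
  and npair_nfst_nsnd [simp]: "npair (nfst z) (nsnd z) = z"
  by (simp_all add: nfst_def nsnd_def npair_def)

lemma npair_eq_iff [simp]: "npair a b = npair c d \<longleftrightarrow> a = c \<and> b = d"
  by (metis nfst_npair nsnd_npair)

definition npair_prog :: recf
  where "npair_prog = Comp add_prog [Comp triangle_prog [Comp add_prog [Proj 0, Proj 1]], Proj 0]"

lemma eval_npair_prog: "eval npair_prog [a, b] (npair a b)"
  unfolding npair_prog_def npair_def prod_encode_def
  by (auto intro!: eval_Comp_pair eval_Comp_single eval_ProjI eval_add_prog eval_triangle_prog)

definition diagonal :: "nat \<Rightarrow> nat" where "diagonal z = (LEAST t. Suc z - triangle (Suc t) = 0)"

lemma le_triangle: "n \<le> triangle n"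
  by (induction n) auto

lemma diagonal_exists: "\<exists>t. Suc z - triangle (Suc t) = 0"
  by (rule exI[of _ z]) (use le_triangle[of "Suc z"] in auto)

lemma triangle_diagonal_bounds: "triangle (diagonal z) \<le> z" "z < triangle (Suc (diagonal z))"
proof -
  show "z < triangle (Suc (diagonal z))"
    using LeastI_ex[OF diagonal_exists[of z]] unfolding diagonal_def by simp
  show "triangle (diagonal z) \<le> z"
  proof (cases "diagonal z")
    case (Suc t)
    then have "t < diagonal z" by simp
    then have "\<not> Suc z - triangle (Suc t) = 0"
      unfolding diagonal_def by (rule not_less_Least)
    with Suc show ?thesis by simp
  qed simp
qed

lemma prod_decode_diagonal:
  "prod_decode z = (z - triangle (diagonal z), diagonal z - (z - triangle (diagonal z)))"
proof -
  let ?w = "diagonal z" let ?a = "z - triangle ?w"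
  have "prod_encode (?a, ?w - ?a) = z"
    using triangle_diagonal_bounds[of z] by (simp add: prod_encode_def)
  then show ?thesis by (metis prod_encode_inverse)
qed

definition diagonal_prog :: recf
  where "diagonal_prog = Mu (Comp diff_prog [Comp triangle_prog [Comp Succ [Proj 0]], Comp Succ [Proj 1]])"

lemma eval_diagonal_prog: "eval diagonal_prog [z] (diagonal z)"
  unfolding diagonal_prog_def diagonal_def
  by (rule eval_Mu_Least[where T = "\<lambda>t z. Suc z - triangle (Suc t)", OF
     eval_Comp_pair[OF eval_Comp_single[OF eval_Comp_single[OF eval_Proj0 eval_Succ] eval_triangle_prog]
        eval_Comp_single[OF eval_Proj1 eval_Succ] eval_diff_prog] diagonal_exists])

definition nfst_prog :: recf where "nfst_prog = Comp diff_prog [Comp triangle_prog [diagonal_prog], Proj 0]"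

lemma eval_nfst_prog: "eval nfst_prog [z] (nfst z)"
  unfolding nfst_prog_def nfst_def prod_decode_diagonal
  by (auto intro!: eval_Comp_pair eval_Comp_single eval_Proj0 eval_diagonal_prog eval_diff_prog
      eval_triangle_prog)

definition nsnd_prog :: recf where "nsnd_prog = Comp diff_prog [nfst_prog, diagonal_prog]"

lemma eval_nsnd_prog: "eval nsnd_prog [z] (nsnd z)"
proof -
  have "nsnd z = diagonal z - nfst z" unfolding nfst_def nsnd_def prod_decode_diagonal by simp
  then show ?thesis unfolding nsnd_prog_def
    by (auto intro!: eval_Comp_pair eval_nfst_prog eval_diagonal_prog eval_diff_prog)
qed

section \<open>Closure properties of computable functions\<close>

named_theorems computable_intros

definition computes2 :: "recf \<Rightarrow> (nat \<Rightarrow> nat \<Rightarrow> nat) \<Rightarrow> bool" where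
  "computes2 p F \<longleftrightarrow> (\<forall>a b. eval p [a, b] (F a b))"

lemma computable_compose1:
  assumes "\<And>x. eval p [x] (F x)" and "computable G"
  shows "computable (\<lambda>x. F (G x))"
proof -
  obtain c where "\<forall>x. eval c [x] (G x)"
    using assms(2) unfolding computable_def by blast
  then have "\<forall>x. eval (Comp p [c]) [x] (F (G x))"
    using assms(1) by (auto intro: eval_Comp_single)
  then show ?thesis unfolding computable_def by blast
qed

lemma computable_compose2:
  assumes "computes2 p F" and "computable G" "computable H"
  shows "computable (\<lambda>x. F (G x) (H x))"
proof -
  obtain cg ch where "\<forall>x. eval cg [x] (G x)" "\<forall>x. eval ch [x] (H x)"
    using assms(2,3) unfolding computable_def by blast
  then have "\<forall>x. eval (Comp p [cg, ch]) [x] (F (G x) (H x))"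
    using assms(1) unfolding computes2_def by (auto intro: eval_Comp_pair)
  then show ?thesis unfolding computable_def by blast
qed

text \<open>Not among computable_intros: its conclusion matches every function.\<close>
lemma computable_comp: "computable F \<Longrightarrow> computable G \<Longrightarrow> computable (\<lambda>x. F (G x))"
  using computable_compose1 unfolding computable_def by metis

lemma computes2_comp_npair:
  assumes "computable U" shows "\<exists>p. computes2 p (\<lambda>a b. U (npair a b))"
proof -
  obtain c where "\<forall>x. eval c [x] (U x)" using assms unfolding computable_def by blast
  then have "computes2 (Comp c [npair_prog]) (\<lambda>a b. U (npair a b))"
    unfolding computes2_def by (auto intro: eval_Comp_single eval_npair_prog)
  then show ?thesis by blast
qed

lemma computable_ident [computable_intros]: "computable (\<lambda>x. x)"
  unfolding computable_def using eval_Proj0 by blast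

lemma computable_const [computable_intros]: "computable (\<lambda>x. k)"
  unfolding computable_def using eval_const_prog by blast

lemma computable_Suc [computable_intros]: "computable F \<Longrightarrow> computable (\<lambda>x. Suc (F x))"
  by (rule computable_compose1[OF eval_Succ])

lemma computable_add [computable_intros]:
  "computable F \<Longrightarrow> computable G \<Longrightarrow> computable (\<lambda>x. F x + G x)"
  by (rule computable_compose2[where p = add_prog]) (auto simp: computes2_def eval_add_prog)

lemma computable_diff [computable_intros]:
  "computable F \<Longrightarrow> computable G \<Longrightarrow> computable (\<lambda>x. F x - G x)"
  using computable_compose2[where p = diff_prog and F = "\<lambda>a b. b - a" and G = G and H = F]
  by (auto simp: computes2_def eval_diff_prog)

lemma computable_mult [computable_intros]:
  "computable F \<Longrightarrow> computable G \<Longrightarrow> computable (\<lambda>x. F x * G x)"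
  by (rule computable_compose2[where p = mult_prog]) (auto simp: computes2_def eval_mult_prog)

lemma computable_npair [computable_intros]:
  "computable F \<Longrightarrow> computable G \<Longrightarrow> computable (\<lambda>x. npair (F x) (G x))"
  by (rule computable_compose2[where p = npair_prog]) (auto simp: computes2_def eval_npair_prog)

lemma computable_nfst [computable_intros]: "computable F \<Longrightarrow> computable (\<lambda>x. nfst (F x))"
  by (rule computable_compose1[OF eval_nfst_prog])

lemma computable_nsnd [computable_intros]: "computable F \<Longrightarrow> computable (\<lambda>x. nsnd (F x))"
  by (rule computable_compose1[OF eval_nsnd_prog])

lemma computable_funpow [computable_intros]:
  assumes S: "computable S" and "computable N" "computable Z"
  shows "computable (\<lambda>x. (S ^^ N x) (Z x))"
proof -
  obtain c where c: "\<forall>x. eval c [x] (S x)" using S unfolding computable_def by blast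
  have "eval (Prim (Proj 0) (Comp c [Proj 0])) [n, z] ((S ^^ n) z)" for n z
  proof (induction n)
    case 0 then show ?case by (auto intro: eval_Prim0 eval_Proj0)
  next
    case (Suc n) then show ?case using c by (auto intro!: eval_PrimS eval_Comp_single eval_Proj0)
  qed
  then have "computes2 (Prim (Proj 0) (Comp c [Proj 0])) (\<lambda>n z. (S ^^ n) z)"
    unfolding computes2_def by blast
  then show ?thesis using computable_compose2 assms by blast
qed

definition decidable :: "(nat \<Rightarrow> bool) \<Rightarrow> bool" where
  "decidable P \<longleftrightarrow> computable (\<lambda>x. if P x then 1 else 0)"

lemma computable_If [computable_intros]:
  assumes "decidable P" "computable A" "computable B"
  shows "computable (\<lambda>x. if P x then A x else B x)"
proof -
  let ?b = "\<lambda>x. if P x then 1 else (0::nat)"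
  have "computable (\<lambda>x. A x * ?b x + B x * (1 - ?b x))"
    using assms unfolding decidable_def by (intro computable_intros)
  moreover have "(\<lambda>x. A x * ?b x + B x * (1 - ?b x)) = (\<lambda>x. if P x then A x else B x)"
    by auto
  ultimately show ?thesis by simp
qed

lemma decidable_if_computable_indicator:
  "computable F \<Longrightarrow> (\<And>x. F x = (if P x then 1 else 0)) \<Longrightarrow> decidable P"
proof -
  assume F: "computable F" and eq: "\<And>x. F x = (if P x then 1 else 0)"
  have "F = (\<lambda>x. if P x then 1 else 0)" using eq by (rule ext)
  with F show ?thesis unfolding decidable_def by simp
qed

lemma decidable_eq [computable_intros]:
  assumes "computable A" "computable B" shows "decidable (\<lambda>x. A x = B x)"
  by (rule decidable_if_computable_indicator[where F = "\<lambda>x. 1 - ((A x - B x) + (B x - A x))"])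
    (intro computable_intros assms, auto)

lemma decidable_less [computable_intros]:
  assumes "computable A" "computable B" shows "decidable (\<lambda>x. A x < B x)"
  by (rule decidable_if_computable_indicator[where F = "\<lambda>x. 1 - (1 - (B x - A x))"])
    (intro computable_intros assms, auto)

lemma decidable_not [computable_intros]:
  assumes "decidable P" shows "decidable (\<lambda>x. \<not> P x)"
  by (rule decidable_if_computable_indicator[where F = "\<lambda>x. if P x then 0 else 1"])
    (intro computable_intros assms, auto)

lemma decidable_conj [computable_intros]:
  assumes "decidable P" "decidable Q" shows "decidable (\<lambda>x. P x \<and> Q x)"
  by (rule decidable_if_computable_indicator[where F = "\<lambda>x. if P x then if Q x then 1 else 0 else 0"])
    (intro computable_intros assms, auto)

lemma decidable_disj [computable_intros]:
  assumes "decidable P" "decidable Q" shows "decidable (\<lambda>x. P x \<or> Q x)"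
  by (rule decidable_if_computable_indicator[where F = "\<lambda>x. if P x then 1 else if Q x then 1 else 0"])
    (intro computable_intros assms, auto)

lemma decidable_le [computable_intros]:
  "computable A \<Longrightarrow> computable B \<Longrightarrow> decidable (\<lambda>x. A x \<le> B x)"
  using decidable_not[OF decidable_less[of B A]] by (simp add: not_less)

lemma decidable_False [computable_intros]: "decidable (\<lambda>x. False)"
  unfolding decidable_def by (simp add: computable_const)

lemma computable_Least [computable_intros]:
  assumes "decidable (\<lambda>z. P (nfst z) (nsnd z))" and "\<And>x. \<exists>n. P n x"
  shows "computable (\<lambda>x. LEAST n. P n x)"
proof -
  let ?T = "\<lambda>a b. 1 - (if P a b then 1 else (0::nat))"
  have "computable (\<lambda>z. ?T (nfst z) (nsnd z))"
    by (intro computable_intros assms(1))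
  then obtain p where "computes2 p (\<lambda>a b. ?T (nfst (npair a b)) (nsnd (npair a b)))"
    by (rule computes2_comp_npair[THEN exE])
  then have "\<And>a b. eval p [a, b] (?T a b)" unfolding computes2_def by simp
  then have "\<And>x. eval (Mu p) [x] (LEAST n. ?T n x = 0)"
    by (rule eval_Mu_Least) (use assms(2) in auto)
  moreover have "\<And>x. (LEAST n. ?T n x = 0) = (LEAST n. P n x)"
    by (rule arg_cong[where f = Least]) auto
  ultimately show ?thesis unfolding computable_def by auto
qed

lemma computable_div2 [computable_intros]: "computable F \<Longrightarrow> computable (\<lambda>x. F x div 2)"
proof -
  assume F: "computable F"
  have "computable (\<lambda>x. LEAST q. x < 2 * q + 2)"
  proof (rule computable_Least)
    show "decidable (\<lambda>z. nsnd z < 2 * nfst z + 2)" by (intro computable_intros)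
    show "\<exists>q. x < 2 * q + 2" for x :: nat by (rule exI[of _ x]) simp
  qed
  moreover have "(LEAST q. x < 2 * q + 2) = x div 2" for x :: nat
    by (rule Least_equality) auto
  ultimately show ?thesis using computable_comp[OF _ F] by simp
qed

lemma decidable_even [computable_intros]: "computable F \<Longrightarrow> decidable (\<lambda>x. even (F x))"
proof -
  assume "computable F"
  then have "decidable (\<lambda>x. F x - 2 * (F x div 2) = 0)" by (intro computable_intros)
  then show ?thesis by (simp add: minus_mult_div_eq_mod even_iff_mod_2_eq_zero)
qed

section \<open>A small-step interpreter\<close>

definition ncons :: "nat \<Rightarrow> nat \<Rightarrow> nat" where "ncons x l = Suc (npair x l)"
definition nhd :: "nat \<Rightarrow> nat" where "nhd l = nfst (l - 1)"
definition ntl :: "nat \<Rightarrow> nat" where "ntl l = nsnd (l - 1)"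

lemma nhd_ncons [simp]: "nhd (ncons x l) = x"
  and ntl_ncons [simp]: "ntl (ncons x l) = l"
  and ncons_neq_zero [simp]: "ncons x l \<noteq> 0" "0 \<noteq> ncons x l"
  by (simp_all add: ncons_def nhd_def ntl_def)

lemma ntl_zero [simp]: "ntl 0 = 0"
  using prod_encode_inverse[of "(0, 0)"] by (simp add: ntl_def nsnd_def prod_encode_def)

primrec enc_list :: "nat list \<Rightarrow> nat" where
  "enc_list [] = 0"
| "enc_list (x # xs) = ncons x (enc_list xs)"

lemma ntl_funpow_enc_list: "(ntl ^^ a) (enc_list xs) = enc_list (drop a xs)"
proof (induction a arbitrary: xs)
  case (Suc a)
  then show ?case
    using Suc.IH[of "[]"] by (cases xs) (simp_all add: funpow_Suc_right del: funpow.simps)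
qed simp

text \<open>
  A machine state is either a call of program c on the coded argument list xs, or the return
  of value v; both carry a continuation K, a coded stack of frames. The machine halts in
  ret_state v 0.\<close>
definition call_state :: "nat \<Rightarrow> nat \<Rightarrow> nat \<Rightarrow> nat" where
  "call_state c xs K = npair 0 (npair c (npair xs K))"
definition ret_state :: "nat \<Rightarrow> nat \<Rightarrow> nat" where
  "ret_state v K = npair 1 (npair v K)"

definition prim_frame :: "nat \<Rightarrow> nat \<Rightarrow> nat \<Rightarrow> nat" where
  "prim_frame h n ys = npair 0 (npair h (npair n ys))"
definition mu_frame :: "nat \<Rightarrow> nat \<Rightarrow> nat \<Rightarrow> nat" where
  "mu_frame f m xs = npair 1 (npair f (npair m xs))"
definition comp_frame :: "nat \<Rightarrow> nat \<Rightarrow> nat \<Rightarrow> nat \<Rightarrow> nat" where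
  "comp_frame f gs xs acc = npair 2 (npair f (npair gs (npair xs acc)))"

text \<open>
  The argument programs of a composition are stored in reverse: the machine evaluates them
  last to first, consing each value onto the accumulator acc, which thus ends up in the
  original order.\<close>
primrec prog_code :: "recf \<Rightarrow> nat" where
  "prog_code Zero = npair 0 0"
| "prog_code Succ = npair 1 0"
| "prog_code (Proj i) = npair 2 i"
| "prog_code (Comp f gs) = npair 3 (npair (prog_code f) (enc_list (rev (map prog_code gs))))"
| "prog_code (Prim g h) = npair 4 (npair (prog_code g) (prog_code h))"
| "prog_code (Mu f) = npair 5 (prog_code f)"

definition step :: "nat \<Rightarrow> nat" where
"step z = (if nfst z = 0 then
   (let r = nsnd z; c = nfst r; xs = nfst (nsnd r); K = nsnd (nsnd r); op = nfst c; a = nsnd c in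
    if op = 0 then ret_state 0 K
    else if op = 1 then (if xs = 0 then z else ret_state (Suc (nhd xs)) K)
    else if op = 2 then
      (if (ntl ^^ a) xs = 0 then z else ret_state (nhd ((ntl ^^ a) xs)) K)
    else if op = 3 then
      (if nsnd a = 0 then call_state (nfst a) 0 K
       else call_state (nhd (nsnd a)) xs (ncons (comp_frame (nfst a) (ntl (nsnd a)) xs 0) K))
    else if op = 4 then
      (if xs = 0 then z
       else if nhd xs = 0 then call_state (nfst a) (ntl xs) K
       else call_state c (ncons (nhd xs - 1) (ntl xs))
              (ncons (prim_frame (nsnd a) (nhd xs - 1) (ntl xs)) K))
    else if op = 5 then call_state a (ncons 0 xs) (ncons (mu_frame a 0 xs) K)
    else z)
 else if nfst z = 1 then
   (let v = nfst (nsnd z); K = nsnd (nsnd z) in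
    if K = 0 then z else
    (let fr = nhd K; K' = ntl K; ft = nfst fr; fa = nsnd fr in
     if ft = 0 then call_state (nfst fa) (ncons v (ncons (nfst (nsnd fa)) (nsnd (nsnd fa)))) K'
     else if ft = 1 then
       (if v = 0 then ret_state (nfst (nsnd fa)) K'
        else call_state (nfst fa) (ncons (Suc (nfst (nsnd fa))) (nsnd (nsnd fa)))
               (ncons (mu_frame (nfst fa) (Suc (nfst (nsnd fa))) (nsnd (nsnd fa))) K'))
     else if ft = 2 then
       (let f = nfst fa; gs = nfst (nsnd fa); xs = nfst (nsnd (nsnd fa));
            acc = ncons v (nsnd (nsnd (nsnd fa))) in
        if gs = 0 then call_state f acc K'
        else call_state (nhd gs) xs (ncons (comp_frame f (ntl gs) xs acc) K'))
     else z))
 else z)"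

lemma computable_step: "computable step"
proof -
  have "computable (\<lambda>z. step z)"
    unfolding step_def Let_def call_state_def ret_state_def prim_frame_def mu_frame_def
      comp_frame_def ncons_def nhd_def ntl_def
    by (intro computable_intros)
  then show ?thesis by simp
qed

lemmas step_unfold = step_def Let_def call_state_def ret_state_def prim_frame_def mu_frame_def
  comp_frame_def

lemma step_Zero: "step (call_state (prog_code Zero) xs K) = ret_state 0 K"
  and step_Comp_Nil: "step (call_state (prog_code (Comp f [])) xs K) = call_state (prog_code f) 0 K"
  and step_Mu:
    "step (call_state (prog_code (Mu f)) xs K)
      = call_state (prog_code f) (ncons 0 xs) (ncons (mu_frame (prog_code f) 0 xs) K)"
  by (simp_all add: step_unfold)

lemma step_Succ: "step (call_state (prog_code Succ) (enc_list (x # xs)) K) = ret_state (Suc x) K"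
  and step_Prim_0:
    "step (call_state (prog_code (Prim g h)) (enc_list (0 # xs)) K)
      = call_state (prog_code g) (enc_list xs) K"
  and step_Prim_Suc:
    "step (call_state (prog_code (Prim g h)) (enc_list (Suc n # xs)) K)
      = call_state (prog_code (Prim g h)) (enc_list (n # xs))
          (ncons (prim_frame (prog_code h) n (enc_list xs)) K)"
  by (simp_all add: step_unfold)

lemma step_Proj:
  "i < length xs \<Longrightarrow> step (call_state (prog_code (Proj i)) (enc_list xs) K) = ret_state (xs ! i) K"
  by (simp add: step_unfold ntl_funpow_enc_list Cons_nth_drop_Suc[symmetric])

lemma step_Comp:
  assumes "rev gs = g # gs'"
  shows "step (call_state (prog_code (Comp f gs)) xs K)
    = call_state (prog_code g) xs (ncons (comp_frame (prog_code f) (enc_list (map prog_code gs')) xs 0) K)"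
proof -
  have "rev (map prog_code gs) = prog_code g # map prog_code gs'"
    using assms by (metis list.simps(9) rev_map)
  then show ?thesis by (simp add: step_unfold)
qed

lemma step_ret_prim:
    "step (ret_state v (ncons (prim_frame h n ys) K)) = call_state h (ncons v (ncons n ys)) K"
  and step_ret_mu_0: "step (ret_state 0 (ncons (mu_frame f m xs) K)) = ret_state m K"
  and step_ret_mu_Suc:
    "step (ret_state (Suc v) (ncons (mu_frame f m xs) K))
      = call_state f (ncons (Suc m) xs) (ncons (mu_frame f (Suc m) xs) K)"
  and step_ret_comp:
    "step (ret_state v (ncons (comp_frame f gs xs acc) K)) =
      (if gs = 0 then call_state f (ncons v acc) K
       else call_state (nhd gs) xs (ncons (comp_frame f (ntl gs) xs (ncons v acc)) K))"
  and step_halted: "step (ret_state v 0) = ret_state v 0"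
  by (simp_all add: step_unfold)

declare prog_code.simps [simp del] enc_list.simps(2) [simp del]

definition reaches :: "nat \<Rightarrow> nat \<Rightarrow> bool" where
  "reaches a b \<longleftrightarrow> (\<exists>n. (step ^^ n) a = b)"

lemma reaches_refl: "reaches a a"
  unfolding reaches_def by (rule exI[of _ 0]) simp

lemma reaches_trans: "reaches a b \<Longrightarrow> reaches b c \<Longrightarrow> reaches a c"
  unfolding reaches_def by (metis funpow_add comp_apply)

lemma reaches_stepI: "step a = b \<Longrightarrow> reaches b c \<Longrightarrow> reaches a c"
  unfolding reaches_def by (metis funpow_Suc_right comp_apply)

abbreviation returns :: "recf \<Rightarrow> nat list \<Rightarrow> nat \<Rightarrow> bool" where
  "returns g xs y \<equiv> \<forall>K. reaches (call_state (prog_code g) (enc_list xs) K) (ret_state y K)"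

lemma reaches_comp_frame:
  assumes "list_all2 (\<lambda>g y. returns g xs y) gs ys" and "gs \<noteq> []"
  shows "reaches
    (call_state (prog_code (hd gs)) (enc_list xs)
      (ncons (comp_frame f (enc_list (map prog_code (tl gs))) (enc_list xs) (enc_list acc)) K))
    (call_state f (enc_list (rev ys @ acc)) K)"
  using assms
proof (induction arbitrary: acc rule: list_all2_induct)
  case (Cons g gs y ys)
  let ?K = "ncons (comp_frame f (enc_list (map prog_code gs)) (enc_list xs) (enc_list acc)) K"
  have "reaches (call_state (prog_code g) (enc_list xs) ?K) (ret_state y ?K)"
    using Cons.hyps(1) by blast
  moreover have "reaches (ret_state y ?K) (call_state f (enc_list (rev (y # ys) @ acc)) K)"
  proof (cases "gs = []")
    case True
    then have "ys = []" using Cons.hyps(2) by simp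
    with True show ?thesis
      by (intro reaches_stepI[OF step_ret_comp]) (simp_all add: enc_list.simps reaches_refl)
  next
    case False
    then show ?thesis
      using Cons.IH[OF False, of "y # acc"]
      by (intro reaches_stepI[OF step_ret_comp]) (cases gs; simp add: enc_list.simps)
  qed
  ultimately show ?case by (simp add: reaches_trans)
qed simp

lemma reaches_Comp:
  assumes "list_all2 (\<lambda>g y. returns g xs y) gs ys"
  shows "reaches (call_state (prog_code (Comp f gs)) (enc_list xs) K)
    (call_state (prog_code f) (enc_list ys) K)"
proof (cases "gs = []")
  case True
  then show ?thesis using assms by (auto intro: reaches_stepI[OF step_Comp_Nil] reaches_refl)
next
  case False
  then obtain g gs' where gs: "rev gs = g # gs'" by (cases "rev gs") auto
  have "list_all2 (\<lambda>g y. returns g xs y) (rev gs) (rev ys)"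
    using assms by (simp add: list_all2_rev)
  from reaches_comp_frame[OF this, of "prog_code f" "[]" K] gs
  show ?thesis by (intro reaches_stepI[OF step_Comp[OF gs]]) simp
qed

lemma reaches_Mu:
  assumes zero: "returns f (n # xs) 0" and pos: "\<forall>m<n. \<exists>y. returns f (m # xs) (Suc y)"
  shows "reaches (call_state (prog_code (Mu f)) (enc_list xs) K) (ret_state n K)"
proof -
  let ?frame = "\<lambda>m. ncons (mu_frame (prog_code f) m (enc_list xs)) K"
  have search: "reaches (call_state (prog_code f) (enc_list ((n - d) # xs)) (?frame (n - d)))
      (ret_state n K)" if "d \<le> n" for d
    using that
  proof (induction d)
    case 0
    have "reaches (call_state (prog_code f) (enc_list (n # xs)) (?frame n)) (ret_state 0 (?frame n))"
      using zero by blast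
    then show ?case by (simp add: reaches_trans reaches_stepI[OF step_ret_mu_0 reaches_refl])
  next
    case (Suc d)
    define m where "m = n - Suc d"
    have m: "m < n" "Suc m = n - d" using Suc.prems unfolding m_def by auto
    obtain y where y: "returns f (m # xs) (Suc y)" using pos m(1) by blast
    have "reaches (ret_state (Suc y) (?frame m)) (ret_state n K)"
      using Suc m(2) by (intro reaches_stepI[OF step_ret_mu_Suc]) (simp add: enc_list.simps)
    then show ?case using y reaches_trans unfolding m_def[symmetric] by blast
  qed
  show ?thesis
    using search[of n] by (intro reaches_stepI[OF step_Mu]) (simp add: enc_list.simps)
qed

lemma eval_imp_returns: "eval c xs y \<Longrightarrow> returns c xs y"
proof (induction rule: eval.induct)
  case (eval_Comp xs gs ys f z)
  then have "list_all2 (\<lambda>g y. returns g xs y) gs ys"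
    by (simp add: list_all2_conv_all_nth)
  with eval_Comp.IH show ?case by (blast intro: reaches_trans reaches_Comp)
next
  case (eval_PrimS g h n xs y z)
  show ?case
  proof
    fix K
    let ?K = "ncons (prim_frame (prog_code h) n (enc_list xs)) K"
    have "reaches (call_state (prog_code (Prim g h)) (enc_list (n # xs)) ?K) (ret_state y ?K)"
      using eval_PrimS.IH(1) by blast
    moreover have "reaches (ret_state y ?K) (ret_state z K)"
      using eval_PrimS.IH(2) by (intro reaches_stepI[OF step_ret_prim]) (simp add: enc_list.simps)
    ultimately show "reaches (call_state (prog_code (Prim g h)) (enc_list (Suc n # xs)) K) (ret_state z K)"
      by (intro reaches_stepI[OF step_Prim_Suc]) (rule reaches_trans)
  qed
next
  case (eval_Mu f n xs)
  then show ?case by (blast intro: reaches_Mu)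
qed (auto intro: reaches_refl reaches_stepI[OF step_Zero] reaches_stepI[OF step_Succ]
       reaches_stepI[OF step_Proj] reaches_stepI[OF step_Prim_0])

lemma halted_stable: "(step ^^ n) z = ret_state y 0 \<Longrightarrow> n \<le> m \<Longrightarrow> (step ^^ m) z = ret_state y 0"
  by (induction m) (auto simp: le_Suc_eq step_halted)

lemma eval_imp_halts: "eval c [x] y \<Longrightarrow> \<exists>n. (step ^^ n) (call_state (prog_code c) (ncons x 0) 0) = ret_state y 0"
  using eval_imp_returns[of c "[x]" y] unfolding reaches_def by (simp add: enc_list.simps)

section \<open>Structures of fixed points with tails\<close>

definition bare_fixpoint :: "(nat \<Rightarrow> nat) \<Rightarrow> nat \<Rightarrow> bool" where
  "bare_fixpoint f x \<longleftrightarrow> f x = x \<and> card (f -` {x}) = 1"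

definition tailed_fixpoint :: "(nat \<Rightarrow> nat) \<Rightarrow> nat \<Rightarrow> bool" where
  "tailed_fixpoint f x \<longleftrightarrow> f x = x \<and> card (f -` {x}) = 2"

text \<open>
  Every orbit is a 1-cycle, either bare or carrying a single \<omega>-chain, and there are
  infinitely many orbits of each kind.\<close>
definition tail_structure :: "(nat \<Rightarrow> nat) \<Rightarrow> bool" where
  "tail_structure f \<longleftrightarrow> is_21_1 f \<and> (\<forall>x. \<exists>n. f ((f ^^ n) x) = (f ^^ n) x)
     \<and> (\<forall>x. f x \<noteq> x \<longrightarrow> card (f -` {x}) = 1)
     \<and> infinite {x. bare_fixpoint f x} \<and> infinite {x. tailed_fixpoint f x}"

definition tail_pred :: "(nat \<Rightarrow> nat) \<Rightarrow> nat \<Rightarrow> nat" where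
  "tail_pred f y = (THE z. f z = y \<and> z \<noteq> y)"

definition tail_elem :: "(nat \<Rightarrow> nat) \<Rightarrow> nat \<Rightarrow> nat \<Rightarrow> nat" where
  "tail_elem f r d = (tail_pred f ^^ d) r"

definition fix_depth :: "(nat \<Rightarrow> nat) \<Rightarrow> nat \<Rightarrow> nat" where
  "fix_depth f x = (LEAST n. f ((f ^^ n) x) = (f ^^ n) x)"

definition fix_root :: "(nat \<Rightarrow> nat) \<Rightarrow> nat \<Rightarrow> nat" where
  "fix_root f x = (f ^^ fix_depth f x) x"

lemma tailed_not_bare: "tailed_fixpoint f x \<Longrightarrow> \<not> bare_fixpoint f x"
  unfolding tailed_fixpoint_def bare_fixpoint_def by simp

lemma tail_pred_ex1:
  assumes f: "tail_structure f" and y: "\<not> bare_fixpoint f y"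
  shows "\<exists>!z. f z = y \<and> z \<noteq> y"
proof (cases "f y = y")
  case True
  have "card (f -` {y}) \<in> {1, 2}" using f unfolding tail_structure_def is_21_1_def by blast
  then have "card (f -` {y}) = 2" using y True unfolding bare_fixpoint_def by auto
  then obtain a b where ab: "f -` {y} = {a, b}" "a \<noteq> b" by (auto simp: card_2_iff)
  then have "f z = y \<longleftrightarrow> z = a \<or> z = b" for z by blast
  with True ab(2) show ?thesis by metis
next
  case False
  have "card (f -` {y}) = 1" using f False unfolding tail_structure_def by blast
  then obtain a where "f -` {y} = {a}" by (auto simp: card_1_singleton_iff)
  with False show ?thesis by (metis singletonD singletonI vimage_singleton_eq)
qed

lemma tail_pred:
  assumes "tail_structure f" "\<not> bare_fixpoint f y"
  shows "f (tail_pred f y) = y" "tail_pred f y \<noteq> y"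
  using theI'[OF tail_pred_ex1[OF assms]] unfolding tail_pred_def by auto

lemma tail_pred_unique:
  assumes "tail_structure f" "\<not> bare_fixpoint f y" "f z = y" "z \<noteq> y"
  shows "z = tail_pred f y"
  using tail_pred_ex1[OF assms(1,2)] tail_pred[OF assms(1,2)] assms(3,4) by blast

lemma tail_elem_0 [simp]: "tail_elem f r 0 = r"
  and tail_elem_Suc: "tail_elem f r (Suc d) = tail_pred f (tail_elem f r d)"
  unfolding tail_elem_def by simp_all

lemma tail_elem_not_bare:
  assumes "tail_structure f" "\<not> bare_fixpoint f r" shows "\<not> bare_fixpoint f (tail_elem f r d)"
proof (induction d)
  case (Suc d)
  then show ?case
    using tail_pred[OF assms(1) Suc] unfolding tail_elem_Suc bare_fixpoint_def by metis
qed (simp add: assms(2))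

lemma tail_elem_Suc_image:
  assumes "tail_structure f" "\<not> bare_fixpoint f r"
  shows "f (tail_elem f r (Suc d)) = tail_elem f r d" "f (tail_elem f r (Suc d)) \<noteq> tail_elem f r (Suc d)"
  using tail_pred[OF assms(1) tail_elem_not_bare[OF assms, of d]] by (auto simp: tail_elem_Suc)

lemma funpow_tail_elem:
  assumes "tail_structure f" "\<not> bare_fixpoint f r" "n \<le> d"
  shows "(f ^^ n) (tail_elem f r d) = tail_elem f r (d - n)"
  using assms(3)
proof (induction n)
  case (Suc n)
  then have "d - n = Suc (d - Suc n)" by arith
  with Suc show ?case using tail_elem_Suc_image(1)[OF assms(1,2)] by simp
qed simp

lemma fix_depth_tail_elem:
  assumes f: "tail_structure f" and r: "tailed_fixpoint f r"
  shows "fix_depth f (tail_elem f r d) = d" "fix_root f (tail_elem f r d) = r"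
proof -
  have nb: "\<not> bare_fixpoint f r" using r by (rule tailed_not_bare)
  have fixed: "f ((f ^^ d) (tail_elem f r d)) = (f ^^ d) (tail_elem f r d)"
    using funpow_tail_elem[OF f nb, of d d] r unfolding tailed_fixpoint_def by simp
  have not_fixed: "f ((f ^^ n) (tail_elem f r d)) \<noteq> (f ^^ n) (tail_elem f r d)" if "n < d" for n
  proof -
    from that have "d - n = Suc (d - Suc n)" by arith
    then show ?thesis
      using funpow_tail_elem[OF f nb, of n d] that tail_elem_Suc_image(2)[OF f nb, of "d - Suc n"]
      by simp
  qed
  show "fix_depth f (tail_elem f r d) = d" unfolding fix_depth_def
  proof (rule Least_equality)
    show "f ((f ^^ d) (tail_elem f r d)) = (f ^^ d) (tail_elem f r d)" by (rule fixed)
    show "d \<le> n" if "f ((f ^^ n) (tail_elem f r d)) = (f ^^ n) (tail_elem f r d)" for n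
      using not_fixed[of n] that by (cases "n < d") auto
  qed
  then show "fix_root f (tail_elem f r d) = r" unfolding fix_root_def
    using funpow_tail_elem[OF f nb, of d d] by simp
qed

lemma tail_elem_of_path:
  assumes f: "tail_structure f"
  shows "f ((f ^^ d) x) = (f ^^ d) x \<Longrightarrow> (\<forall>m<d. f ((f ^^ m) x) \<noteq> (f ^^ m) x)
    \<Longrightarrow> \<not> bare_fixpoint f x \<Longrightarrow> \<not> bare_fixpoint f ((f ^^ d) x) \<and> x = tail_elem f ((f ^^ d) x) d"
proof (induction d arbitrary: x)
  case (Suc d)
  have moved: "f x \<noteq> x" using Suc.prems(2) by force
  have eq: "(f ^^ Suc d) x = (f ^^ d) (f x)" by (simp add: funpow_Suc_right del: funpow.simps)
  have "\<not> bare_fixpoint f (f x)"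
  proof
    assume "bare_fixpoint f (f x)"
    then obtain a where a: "f -` {f x} = {a}" and "f (f x) = f x"
      unfolding bare_fixpoint_def by (auto simp: card_1_singleton_iff)
    then have "x \<in> {a}" "f x \<in> {a}" unfolding a[symmetric] by simp_all
    with moved show False by simp
  qed
  moreover have "\<forall>m<d. f ((f ^^ m) (f x)) \<noteq> (f ^^ m) (f x)"
    using Suc.prems(2) by (auto simp: funpow_Suc_right simp del: funpow.simps)
  ultimately have "\<not> bare_fixpoint f ((f ^^ d) (f x)) \<and> f x = tail_elem f ((f ^^ d) (f x)) d"
    using Suc.IH[of "f x"] Suc.prems(1) eq by simp
  moreover have "x = tail_pred f (f x)"
    using tail_pred_unique[OF f \<open>\<not> bare_fixpoint f (f x)\<close> refl moved[symmetric]] .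
  ultimately show ?case using eq by (simp add: tail_elem_Suc)
qed simp

lemma tail_elem_fix_root:
  assumes f: "tail_structure f" and x: "\<not> bare_fixpoint f x"
  shows "tailed_fixpoint f (fix_root f x)" "x = tail_elem f (fix_root f x) (fix_depth f x)"
proof -
  have "\<exists>n. f ((f ^^ n) x) = (f ^^ n) x" using f unfolding tail_structure_def by blast
  then have fixed: "f ((f ^^ fix_depth f x) x) = (f ^^ fix_depth f x) x"
    unfolding fix_depth_def by (rule LeastI_ex)
  have "\<forall>m<fix_depth f x. f ((f ^^ m) x) \<noteq> (f ^^ m) x"
    unfolding fix_depth_def using not_less_Least by blast
  then have r: "\<not> bare_fixpoint f (fix_root f x) \<and> x = tail_elem f (fix_root f x) (fix_depth f x)"
    using tail_elem_of_path[OF f fixed _ x] unfolding fix_root_def by simp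
  then show "x = tail_elem f (fix_root f x) (fix_depth f x)" by simp
  have "card (f -` {fix_root f x}) \<in> {1, 2}" using f unfolding tail_structure_def is_21_1_def by blast
  with r fixed show "tailed_fixpoint f (fix_root f x)"
    unfolding tailed_fixpoint_def bare_fixpoint_def fix_root_def by auto
qed

definition tail_map :: "(nat \<Rightarrow> nat) \<Rightarrow> (nat \<Rightarrow> nat) \<Rightarrow> (nat \<Rightarrow> nat) \<Rightarrow> (nat \<Rightarrow> nat) \<Rightarrow> nat \<Rightarrow> nat"
  where "tail_map f g pP pR x =
    (if bare_fixpoint f x then pP x else tail_elem g (pR (fix_root f x)) (fix_depth f x))"

lemma tail_map_inverse:
  assumes f: "tail_structure f" and g: "tail_structure g"
    and P: "\<And>x. bare_fixpoint f x \<Longrightarrow> bare_fixpoint g (pP x) \<and> pP' (pP x) = x"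
    and R: "\<And>x. tailed_fixpoint f x \<Longrightarrow> tailed_fixpoint g (pR x) \<and> pR' (pR x) = x"
  shows "tail_map g f pP' pR' (tail_map f g pP pR x) = x"
proof (cases "bare_fixpoint f x")
  case False
  note x = tail_elem_fix_root[OF f False]
  have r: "tailed_fixpoint g (pR (fix_root f x))" using R x(1) by blast
  show ?thesis
    using False tail_elem_not_bare[OF g tailed_not_bare[OF r]] fix_depth_tail_elem[OF g r]
      R[OF x(1)] x(2)
    unfolding tail_map_def by simp
qed (use P in \<open>simp add: tail_map_def\<close>)

lemma tail_map_commute:
  assumes f: "tail_structure f" and g: "tail_structure g"
    and P: "\<And>x. bare_fixpoint f x \<Longrightarrow> bare_fixpoint g (pP x)"
    and R: "\<And>x. tailed_fixpoint f x \<Longrightarrow> tailed_fixpoint g (pR x)"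
  shows "tail_map f g pP pR (f x) = g (tail_map f g pP pR x)"
proof (cases "bare_fixpoint f x")
  case True
  then show ?thesis using P[OF True] unfolding tail_map_def bare_fixpoint_def by simp
next
  case False
  note x = tail_elem_fix_root[OF f False]
  let ?r = "fix_root f x"
  have r: "tailed_fixpoint g (pR ?r)" using R x(1) by blast
  show ?thesis
  proof (cases "fix_depth f x")
    case 0
    then have "f x = x" using x unfolding tailed_fixpoint_def by simp
    then show ?thesis using False 0 r unfolding tail_map_def tailed_fixpoint_def by simp
  next
    case (Suc d)
    have fx: "f x = tail_elem f ?r d"
      using x(2) Suc tail_elem_Suc_image(1)[OF f tailed_not_bare[OF x(1)]] by metis
    then have "\<not> bare_fixpoint f (f x)" using tail_elem_not_bare[OF f tailed_not_bare[OF x(1)]] by simp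
    then have "tail_map f g pP pR (f x) = tail_elem g (pR ?r) d"
      using fx fix_depth_tail_elem[OF f x(1), of d] unfolding tail_map_def by simp
    also have "\<dots> = g (tail_elem g (pR ?r) (Suc d))"
      using tail_elem_Suc_image(1)[OF g tailed_not_bare[OF r]] by simp
    also have "\<dots> = g (tail_map f g pP pR x)" using False Suc unfolding tail_map_def by simp
    finally show ?thesis .
  qed
qed

lemma bij_betw_infinite_nat_sets:
  fixes A B :: "nat set"
  assumes "infinite A" "infinite B"
  shows "\<exists>p. bij_betw p A B"
  using bij_betw_trans[OF bij_betw_the_inv_into[OF bij_enumerate[OF assms(1)]] bij_enumerate[OF assms(2)]]
  by blast

lemma bij_betw_inverse_pair:
  assumes "bij_betw p A B"
  obtains p' where "\<And>x. x \<in> A \<Longrightarrow> p x \<in> B \<and> p' (p x) = x" "\<And>y. y \<in> B \<Longrightarrow> p' y \<in> A \<and> p (p' y) = y"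
proof (rule that[of "inv_into A p"])
  from assms have inj: "inj_on p A" and img: "p ` A = B" by (auto simp: bij_betw_def)
  show "x \<in> A \<Longrightarrow> p x \<in> B \<and> inv_into A p (p x) = x" for x
    using inj img by auto
  show "y \<in> B \<Longrightarrow> inv_into A p y \<in> A \<and> p (inv_into A p y) = y" for y
    using img by (auto intro: inv_into_into f_inv_into_f)
qed

theorem tail_structures_isomorphic:
  assumes f: "tail_structure f" and g: "tail_structure g"
  shows "\<exists>h. struct_iso f g h"
proof -
  have "infinite {x. bare_fixpoint f x}" "infinite {x. bare_fixpoint g x}"
    "infinite {x. tailed_fixpoint f x}" "infinite {x. tailed_fixpoint g x}"
    using f g unfolding tail_structure_def by simp_all
  then obtain pP pR where pP: "bij_betw pP {x. bare_fixpoint f x} {x. bare_fixpoint g x}"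
    and pR: "bij_betw pR {x. tailed_fixpoint f x} {x. tailed_fixpoint g x}"
    using bij_betw_infinite_nat_sets by metis
  obtain pP' where
      P: "\<And>x. bare_fixpoint f x \<Longrightarrow> bare_fixpoint g (pP x) \<and> pP' (pP x) = x"
      "\<And>x. bare_fixpoint g x \<Longrightarrow> bare_fixpoint f (pP' x) \<and> pP (pP' x) = x"
    using bij_betw_inverse_pair[OF pP] unfolding mem_Collect_eq by blast
  obtain pR' where
      R: "\<And>x. tailed_fixpoint f x \<Longrightarrow> tailed_fixpoint g (pR x) \<and> pR' (pR x) = x"
      "\<And>x. tailed_fixpoint g x \<Longrightarrow> tailed_fixpoint f (pR' x) \<and> pR (pR' x) = x"
    using bij_betw_inverse_pair[OF pR] unfolding mem_Collect_eq by blast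
  let ?h = "tail_map f g pP pR" and ?h' = "tail_map g f pP' pR'"
  have "?h' (?h x) = x" "?h (?h' x) = x" for x
    using tail_map_inverse[OF f g P(1) R(1)] tail_map_inverse[OF g f P(2) R(2)] by blast+
  then have "bij ?h" by (intro o_bij[where g = ?h']) (simp_all add: fun_eq_iff)
  moreover have "?h (f x) = g (?h x)" for x
    by (rule tail_map_commute[OF f g]) (use P R in blast)+
  ultimately show ?thesis unfolding struct_iso_def by blast
qed

lemma struct_iso_bare_fixpoint:
  assumes "struct_iso f g h" "bare_fixpoint f x" shows "bare_fixpoint g (h x)"
proof -
  have h: "bij h" "\<And>x. h (f x) = g (h x)" using assms(1) unfolding struct_iso_def by auto
  have "y \<in> g -` {h x} \<longleftrightarrow> y \<in> h ` (f -` {x})" for y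
  proof -
    obtain z where "y = h z" using surjD[OF bij_is_surj[OF h(1)]] by blast
    then show ?thesis using inj_eq[OF bij_is_inj[OF h(1)]] by (auto simp: h(2)[symmetric])
  qed
  then have "g -` {h x} = h ` (f -` {x})" by blast
  moreover have "card (h ` (f -` {x})) = card (f -` {x})"
    using card_image[OF inj_on_subset[OF bij_is_inj[OF h(1)] subset_UNIV]] .
  ultimately show ?thesis using assms(2) h(2)[of x] unfolding bare_fixpoint_def by simp
qed

section \<open>Splitting tails off fixed points\<close>

definition node_E :: "nat \<Rightarrow> nat \<Rightarrow> nat" where "node_E j k = 4 * npair j k + 1"
definition node_S :: "nat \<Rightarrow> nat \<Rightarrow> nat" where "node_S j k = 4 * npair j k + 3"

lemma node_E_eq_iff [simp]: "node_E j k = node_E j' k' \<longleftrightarrow> j = j' \<and> k = k'"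
  and node_S_eq_iff [simp]: "node_S j k = node_S j' k' \<longleftrightarrow> j = j' \<and> k = k'"
  unfolding node_E_def node_S_def by simp_all

lemma node_E_neq [simp]: "node_E j k \<noteq> node_S j' k'" "node_S j' k' \<noteq> node_E j k"
    "node_E j k \<noteq> 2 * i" "2 * i \<noteq> node_E j k"
  and node_S_neq [simp]: "node_S j k \<noteq> 2 * i" "2 * i \<noteq> node_S j k"
  unfolding node_E_def node_S_def by presburger+

lemma node_E_div: "odd (node_E j k)" "node_E j k div 2 = 2 * npair j k"
  and node_S_div: "odd (node_S j k)" "node_S j k div 2 = 2 * npair j k + 1"
  unfolding node_E_def node_S_def by presburger+

lemma node_cases:
  obtains (even) j where "x = 2 * j" | (E) j k where "x = node_E j k" | (S) j k where "x = node_S j k"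
proof (cases "even x")
  case False
  define w where "w = x div 2 div 2"
  have "x = 4 * npair (nfst w) (nsnd w) + 1 \<or> x = 4 * npair (nfst w) (nsnd w) + 3"
    using False unfolding w_def npair_nfst_nsnd by presburger
  with that(2,3) show ?thesis unfolding node_E_def node_S_def by blast
qed (use that(1) in blast)

text \<open>
  For each j, 2j is a fixed point, and node_E j 0 is a fixed point carrying the chain
  \<dots> \<rightarrow> node_E j 1 \<rightarrow> node_S j 0 \<rightarrow> node_E j 0. Once ev j k holds, at the least such stage s,
  the S-nodes from s upwards are cut off and form a chain leading into 2j, while the E-nodes
  from s upwards keep the chain of node_E j 0 infinite.\<close>
definition split_struct :: "(nat \<Rightarrow> nat \<Rightarrow> bool) \<Rightarrow> nat \<Rightarrow> nat" where
  "split_struct ev x = (if even x then x else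
     (let y = x div 2; w = y div 2; j = nfst w; k = nsnd w in
      if even y then (if k = 0 then x else if ev j (k - 1) then node_E j (k - 1) else node_S j (k - 1))
      else (if \<not> ev j k then node_E j k else if \<not> ev j (k - 1) then 2 * j else node_S j (k - 1))))"

definition split_schedule :: "(nat \<Rightarrow> nat \<Rightarrow> bool) \<Rightarrow> bool" where
  "split_schedule ev \<longleftrightarrow> (\<forall>j. \<not> ev j 0) \<and> (\<forall>j k k'. ev j k \<longrightarrow> k \<le> k' \<longrightarrow> ev j k')"

lemma split_schedule_0: "split_schedule ev \<Longrightarrow> \<not> ev j 0"
  and split_schedule_mono: "split_schedule ev \<Longrightarrow> ev j k \<Longrightarrow> k \<le> k' \<Longrightarrow> ev j k'"
  unfolding split_schedule_def by blast+

lemma split_struct_even [simp]: "split_struct ev (2 * j) = 2 * j"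
  and split_struct_E_0 [simp]: "split_struct ev (node_E j 0) = node_E j 0"
  and split_struct_E_Suc [simp]:
    "split_struct ev (node_E j (Suc k)) = (if ev j k then node_E j k else node_S j k)"
  and split_struct_S [simp]: "split_struct ev (node_S j k) =
    (if \<not> ev j k then node_E j k else if \<not> ev j (k - 1) then 2 * j else node_S j (k - 1))"
  unfolding split_struct_def Let_def by (simp_all add: node_E_div node_S_div)

lemma vimage_split_struct_E_0:
  assumes "split_schedule ev" shows "split_struct ev -` {node_E j 0} = {node_E j 0, node_S j 0}"
proof (rule set_eqI)
  fix y show "y \<in> split_struct ev -` {node_E j 0} \<longleftrightarrow> y \<in> {node_E j 0, node_S j 0}"
  proof (cases y rule: node_cases)
    case (E i k) then show ?thesis using split_schedule_0[OF assms] by (cases k) (auto intro: gr0I)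
  next
    case (S i k) then show ?thesis using split_schedule_0[OF assms] by (cases k) auto
  qed simp
qed

lemma vimage_split_struct_E_Suc:
  assumes "split_schedule ev"
  shows "split_struct ev -` {node_E j (Suc k)} =
    (if ev j (Suc k) then {node_E j (Suc (Suc k))} else {node_S j (Suc k)})"
proof (rule set_eqI)
  fix y show "y \<in> split_struct ev -` {node_E j (Suc k)} \<longleftrightarrow>
      y \<in> (if ev j (Suc k) then {node_E j (Suc (Suc k))} else {node_S j (Suc k)})"
  proof (cases y rule: node_cases)
    case (E i k') then show ?thesis by (cases k') auto
  qed auto
qed

lemma vimage_split_struct_S:
  assumes "split_schedule ev"
  shows "split_struct ev -` {node_S j k} = (if ev j k then {node_S j (Suc k)} else {node_E j (Suc k)})"
proof (rule set_eqI)
  fix y show "y \<in> split_struct ev -` {node_S j k} \<longleftrightarrow>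
      y \<in> (if ev j k then {node_S j (Suc k)} else {node_E j (Suc k)})"
  proof (cases y rule: node_cases)
    case (E i k') then show ?thesis by (cases k') auto
  next
    case (S i k')
    have "ev j (Suc k) \<and> ev j k \<longleftrightarrow> ev j k" using split_schedule_mono[OF assms, of j k "Suc k"] by auto
    with S show ?thesis using split_schedule_0[OF assms] by (cases k') auto
  qed simp
qed

lemma vimage_split_struct_even:
  assumes "split_schedule ev"
  shows "split_struct ev -` {2 * j} = insert (2 * j) {node_S j k | k. ev j k \<and> \<not> ev j (k - 1)}"
proof (rule set_eqI)
  fix y show "y \<in> split_struct ev -` {2 * j} \<longleftrightarrow> y \<in> insert (2 * j) {node_S j k | k. ev j k \<and> \<not> ev j (k - 1)}"
  proof (cases y rule: node_cases)
    case (E i k') then show ?thesis by (cases k') auto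
  qed auto
qed

lemma split_stage_unique:
  assumes "split_schedule ev" "ev j k"
  shows "{node_S j k | k. ev j k \<and> \<not> ev j (k - 1)} = {node_S j (LEAST k. ev j k)}"
proof -
  let ?s = "LEAST k. ev j k"
  have s: "ev j ?s" using LeastI[of "ev j", OF assms(2)] .
  then have "?s \<noteq> 0" using split_schedule_0[OF assms(1)] by metis
  then have s1: "\<not> ev j (?s - 1)" using not_less_Least[of "?s - 1" "ev j"] by simp
  have "k = ?s" if "ev j k" "\<not> ev j (k - 1)" for k
  proof (rule ccontr)
    assume "k \<noteq> ?s"
    with Least_le[of "ev j", OF that(1)] have "?s \<le> k - 1" by arith
    then show False using split_schedule_mono[OF assms(1) s] that(2) by blast
  qed
  with s s1 show ?thesis by blast
qed

lemma card_vimage_split_struct_even: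
  assumes "split_schedule ev"
  shows "card (split_struct ev -` {2 * j}) = (if \<exists>k. ev j k then 2 else 1)"
proof (cases "\<exists>k. ev j k")
  case True
  then show ?thesis using vimage_split_struct_even[OF assms] split_stage_unique[OF assms] by auto
next
  case False
  then show ?thesis using vimage_split_struct_even[OF assms] by simp
qed

lemma split_struct_is_21_1:
  assumes "split_schedule ev" shows "is_21_1 (split_struct ev)"
  unfolding is_21_1_def
proof
  fix a show "card (split_struct ev -` {a}) \<in> {1, 2}"
  proof (cases a rule: node_cases)
    case (even i) then show ?thesis using card_vimage_split_struct_even[OF assms] by simp
  next
    case (E i k) then show ?thesis
      using vimage_split_struct_E_0[OF assms] vimage_split_struct_E_Suc[OF assms] by (cases k) auto
  next
    case (S i k) then show ?thesis using vimage_split_struct_S[OF assms] by auto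
  qed
qed

lemma split_struct_moved_card:
  assumes "split_schedule ev" "split_struct ev x \<noteq> x" shows "card (split_struct ev -` {x}) = 1"
proof (cases x rule: node_cases)
  case (even i) then show ?thesis using assms by simp
next
  case (E i k) then show ?thesis using assms vimage_split_struct_E_Suc[OF assms(1)] by (cases k) auto
next
  case (S i k) then show ?thesis using vimage_split_struct_S[OF assms(1)] by auto
qed

lemma bare_fixpoint_split_struct_iff:
  assumes "split_schedule ev"
  shows "bare_fixpoint (split_struct ev) x \<longleftrightarrow> (\<exists>j. x = 2 * j \<and> \<not> (\<exists>k. ev j k))"
proof (cases x rule: node_cases)
  case (even i) then show ?thesis using card_vimage_split_struct_even[OF assms] unfolding bare_fixpoint_def by auto
next
  case (E i k) then show ?thesis using vimage_split_struct_E_0[OF assms] unfolding bare_fixpoint_def by (cases k) auto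
next
  case (S i k)
  then have "split_struct ev x \<noteq> x" using split_schedule_0[OF assms] by (cases k) auto
  with S show ?thesis unfolding bare_fixpoint_def by auto
qed

lemma tailed_fixpoint_split_struct_E_0:
  assumes "split_schedule ev" shows "tailed_fixpoint (split_struct ev) (node_E j 0)"
  using vimage_split_struct_E_0[OF assms] unfolding tailed_fixpoint_def by simp

lemma split_struct_reaches_fixpoint:
  assumes "split_schedule ev"
  shows "\<exists>n. split_struct ev ((split_struct ev ^^ n) x) = (split_struct ev ^^ n) x"
proof -
  let ?f = "split_struct ev"
  let ?R = "\<lambda>x. \<exists>n. ?f ((?f ^^ n) x) = (?f ^^ n) x"
  have at_fixpoint: "?R x" if "?f x = x" for x
    using that by (intro exI[of _ 0]) simp
  have preimage: "?R x" if "?R (?f x)" for x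
  proof -
    from that obtain n where "?f ((?f ^^ n) (?f x)) = (?f ^^ n) (?f x)" ..
    then have "?f ((?f ^^ Suc n) x) = (?f ^^ Suc n) x"
      by (simp add: funpow_Suc_right del: funpow.simps)
    then show ?thesis ..
  qed
  have "?R (node_E j k) \<and> ?R (node_S j k)" for j k
  proof (induction k)
    case 0
    have "?R (node_S j 0)"
      by (rule preimage, rule at_fixpoint) (simp add: split_schedule_0[OF assms])
    then show ?case by (auto intro: at_fixpoint)
  next
    case (Suc k)
    have E: "?R (node_E j (Suc k))" by (rule preimage) (use Suc.IH in \<open>cases "ev j k"; simp\<close>)
    have "?R (node_S j (Suc k))"
    proof (rule preimage)
      consider "\<not> ev j (Suc k)" | "ev j (Suc k)" "ev j k" | "ev j (Suc k)" "\<not> ev j k" by blast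
      then show "?R (?f (node_S j (Suc k)))"
      proof cases
        case 3 then show ?thesis by (intro at_fixpoint) simp
      qed (use E Suc.IH in simp_all)
    qed
    with E show ?case ..
  qed
  then show ?thesis by (cases x rule: node_cases) (auto intro: at_fixpoint)
qed

lemma split_struct_tail_structure:
  assumes "split_schedule ev" "infinite {j. \<not> (\<exists>k. ev j k)}"
  shows "tail_structure (split_struct ev)"
  unfolding tail_structure_def
proof (intro conjI allI impI)
  show "is_21_1 (split_struct ev)" by (rule split_struct_is_21_1[OF assms(1)])
  show "\<exists>n. split_struct ev ((split_struct ev ^^ n) x) = (split_struct ev ^^ n) x" for x
    by (rule split_struct_reaches_fixpoint[OF assms(1)])
  show "card (split_struct ev -` {x}) = 1" if "split_struct ev x \<noteq> x" for x
    using split_struct_moved_card[OF assms(1) that] .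
  have "{x. bare_fixpoint (split_struct ev) x} = (\<lambda>j. 2 * j) ` {j. \<not> (\<exists>k. ev j k)}"
    using bare_fixpoint_split_struct_iff[OF assms(1)] by auto
  moreover have "inj (\<lambda>j::nat. 2 * j)" by (rule injI) simp
  ultimately show "infinite {x. bare_fixpoint (split_struct ev) x}"
    using assms(2) by (simp add: finite_image_iff inj_on_subset)
  have "range (\<lambda>j. node_E j 0) \<subseteq> {x. tailed_fixpoint (split_struct ev) x}"
    using tailed_fixpoint_split_struct_E_0[OF assms(1)] by auto
  moreover have "inj (\<lambda>j. node_E j 0)" by (rule injI) simp
  ultimately show "infinite {x. tailed_fixpoint (split_struct ev) x}"
    by (meson finite_subset infinite_UNIV_nat finite_imageD)
qed

lemma split_struct_no_Z_chains:
  assumes "split_schedule ev" shows "no_Z_chains (split_struct ev)"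
  unfolding no_Z_chains_def
proof
  fix x
  obtain n where n: "split_struct ev ((split_struct ev ^^ n) x) = (split_struct ev ^^ n) x"
    using split_struct_reaches_fixpoint[OF assms] by blast
  have "(split_struct ev ^^ n) x \<in> orbit (split_struct ev) x"
    unfolding orbit_def by (intro CollectI exI[of _ n] exI[of _ 0]) simp
  moreover have "cyclic (split_struct ev) ((split_struct ev ^^ n) x)"
    unfolding cyclic_def using n by (intro exI[of _ 1]) simp
  ultimately show "\<exists>y\<in>orbit (split_struct ev) x. cyclic (split_struct ev) y" by blast
qed

lemma computable_split_struct:
  assumes "decidable (\<lambda>z. ev (nfst z) (nsnd z))"
  shows "computable (split_struct ev)"
proof -
  have decidable_ev: "decidable (\<lambda>x. ev (A x) (B x))" if "computable A" "computable B" for A B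
  proof -
    have "computable (\<lambda>x. (\<lambda>z. if ev (nfst z) (nsnd z) then 1 else 0) (npair (A x) (B x)))"
      using assms unfolding decidable_def by (rule computable_comp[OF _ computable_npair[OF that]])
    then show ?thesis unfolding decidable_def by simp
  qed
  have "computable (\<lambda>x. split_struct ev x)"
    unfolding split_struct_def Let_def node_E_def node_S_def by (intro computable_intros decidable_ev)
  then show ?thesis by simp
qed

abbreviation unsplit_struct :: "nat \<Rightarrow> nat" where
  "unsplit_struct \<equiv> split_struct (\<lambda>j k. False)"

lemma split_schedule_False: "split_schedule (\<lambda>j k. False)"
  unfolding split_schedule_def by simp

lemma branching_unsplit_struct:
  "branching unsplit_struct x = (if odd x \<and> even (x div 2) \<and> nsnd (x div 2 div 2) = 0 then 2 else 1)"
proof (cases x rule: node_cases)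
  case (even j)
  then show ?thesis
    using card_vimage_split_struct_even[OF split_schedule_False] by (simp add: branching_def)
next
  case (E j k)
  then show ?thesis
    using vimage_split_struct_E_0[OF split_schedule_False] vimage_split_struct_E_Suc[OF split_schedule_False]
    by (cases k) (simp_all add: branching_def node_E_div)
next
  case (S j k)
  then show ?thesis
    using vimage_split_struct_S[OF split_schedule_False] by (simp add: branching_def node_S_div)
qed

lemma computable_branching_unsplit_struct: "computable (branching unsplit_struct)"
proof -
  have "computable (\<lambda>x. if odd x \<and> even (x div 2) \<and> nsnd (x div 2 div 2) = 0 then 2 else 1)"
    by (intro computable_intros)
  then show ?thesis by (simp add: branching_unsplit_struct[abs_def])
qed

lemma Lambda_unsplit_struct: "x \<in> Lambda unsplit_struct \<Longrightarrow> \<exists>j. x = node_E j 0"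
  unfolding Lambda_def
  by (cases x rule: node_cases)
    (auto simp: branching_unsplit_struct node_E_div node_S_div split: if_splits)

lemma tree_verts_no_fixpoint:
  assumes "f y = x" "y \<noteq> x" "a \<in> tree_verts f y" shows "f a \<noteq> a"
proof
  assume "f a = a"
  then have "(f ^^ n) a = a" for n by (induction n) auto
  then have "a = y" using assms(3) unfolding tree_verts_def by auto
  with \<open>f a = a\<close> assms(1,2) show False by simp
qed

text \<open>
  Tree(x) contains the loop (x, x), while the tree of the other preimage contains no fixed
  point at all.\<close>
lemma iso_fun_fixpoint:
  assumes fx: "f x = x" and vimage: "f -` {x} = {x, y}" and "y \<noteq> x"
  shows "iso_fun f x = 0"
proof -
  have fy: "f y = x" using vimage by auto
  have x: "x \<in> tree_verts f x" "(x, x) \<in> tree_edges f x"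
    unfolding tree_verts_def tree_edges_def using fx by (auto intro: exI[of _ 0])
  have loop: "\<exists>a \<in> tree_verts f y. f a = a" if "tree_iso f x y \<or> tree_iso f y x"
    using that
  proof
    assume "tree_iso f x y"
    then obtain h where "\<forall>a\<in>tree_verts f x. \<forall>b\<in>tree_verts f x.
        (a, b) \<in> tree_edges f x \<longleftrightarrow> (h a, h b) \<in> tree_edges f y"
      unfolding tree_iso_def by blast
    then have "(h x, h x) \<in> tree_edges f y" using x by blast
    then show ?thesis unfolding tree_edges_def by (auto intro: sym)
  next
    assume "tree_iso f y x"
    then obtain h where h: "bij_betw h (tree_verts f y) (tree_verts f x)"
      "\<forall>a\<in>tree_verts f y. \<forall>b\<in>tree_verts f y.
        (a, b) \<in> tree_edges f y \<longleftrightarrow> (h a, h b) \<in> tree_edges f x"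
      unfolding tree_iso_def by blast
    then obtain a where a: "a \<in> tree_verts f y" "h a = x"
      using x(1) by (metis bij_betw_iff_bijections)
    with h(2) x(2) have "(a, a) \<in> tree_edges f y" by auto
    with a(1) show ?thesis unfolding tree_edges_def by (auto intro: sym)
  qed
  have "\<not> (\<exists>x1 x2. x1 \<noteq> x2 \<and> f x1 = x \<and> f x2 = x \<and> tree_iso f x1 x2)"
  proof
    assume "\<exists>x1 x2. x1 \<noteq> x2 \<and> f x1 = x \<and> f x2 = x \<and> tree_iso f x1 x2"
    then obtain x1 x2 where "x1 \<noteq> x2" "x1 \<in> {x, y}" "x2 \<in> {x, y}" "tree_iso f x1 x2"
      using vimage by blast
    then have "tree_iso f x y \<or> tree_iso f y x" by auto
    then show False using loop tree_verts_no_fixpoint[of f y x] fy \<open>y \<noteq> x\<close> by blast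
  qed
  then show ?thesis unfolding iso_fun_def by simp
qed

lemma computable_on_iso_fun_unsplit_struct: "computable_on (Lambda unsplit_struct) (iso_fun unsplit_struct)"
  unfolding computable_on_def
proof (intro exI[of _ Zero] ballI)
  fix x assume "x \<in> Lambda unsplit_struct"
  then obtain j where x: "x = node_E j 0" using Lambda_unsplit_struct by blast
  have "iso_fun unsplit_struct x = 0"
    by (rule iso_fun_fixpoint[of _ _ "node_S j 0"])
      (simp_all add: x vimage_split_struct_E_0[OF split_schedule_False])
  then show "eval Zero [x] (iso_fun unsplit_struct x)" using eval_Zero by simp
qed

section \<open>The diagonalising structure\<close>

definition run :: "nat \<Rightarrow> nat \<Rightarrow> nat \<Rightarrow> nat" where
  "run e i k = (step ^^ k) (call_state e (ncons (2 * i) 0) 0)"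

definition halted :: "nat \<Rightarrow> bool" where "halted z \<longleftrightarrow> nfst z = 1 \<and> nsnd (nsnd z) = 0"
definition ret_value :: "nat \<Rightarrow> nat" where "ret_value z = nfst (nsnd z)"

definition halted_upto :: "nat \<Rightarrow> nat \<Rightarrow> bool" where
  "halted_upto e k \<longleftrightarrow> (\<forall>i \<le> 2 * e. halted (run e i k))"

definition large_even_value :: "nat \<Rightarrow> nat \<Rightarrow> nat \<Rightarrow> bool" where
  "large_even_value e k i \<longleftrightarrow> even (ret_value (run e i k)) \<and> 2 * e \<le> ret_value (run e i k) div 2"

definition witness_index :: "nat \<Rightarrow> nat \<Rightarrow> nat" where
  "witness_index e k = (LEAST i. 2 * e < i \<or> large_even_value e k i)"

definition witness_value :: "nat \<Rightarrow> nat \<Rightarrow> nat" where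
  "witness_value e k = ret_value (run e (witness_index e k) k) div 2"

text \<open>
  Program e may split only one j: the first value 2j with j \<ge> 2e among its values on the
  inputs 2i, i \<le> 2e, and only once all of these computations have halted. As only programs
  e \<le> j/2 may split j, infinitely many j remain unsplit.\<close>
definition diag_split :: "nat \<Rightarrow> nat \<Rightarrow> bool" where
  "diag_split j k \<longleftrightarrow> 0 < k \<and>
    (\<exists>e \<le> j div 2. halted_upto e k \<and> witness_index e k \<le> 2 * e \<and> witness_value e k = j)"

abbreviation diag_struct :: "nat \<Rightarrow> nat" where
  "diag_struct \<equiv> split_struct diag_split"

lemma halted_ret_state [simp]: "halted (ret_state v 0)" "ret_value (ret_state v 0) = v"
  unfolding halted_def ret_value_def ret_state_def by simp_all

lemma halted_run_stable:
  assumes "halted (run e i k)" "k \<le> k'" shows "run e i k' = run e i k"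
proof -
  have "run e i k = ret_state (ret_value (run e i k)) 0"
    using assms(1) unfolding halted_def ret_value_def ret_state_def by (metis npair_nfst_nsnd)
  then show ?thesis using halted_stable assms(2) unfolding run_def by metis
qed

lemma halted_upto_stable:
  assumes "halted_upto e k" "k \<le> k'"
  shows "halted_upto e k'" "i \<le> 2 * e \<Longrightarrow> run e i k' = run e i k"
  using assms halted_run_stable unfolding halted_upto_def by metis+

lemma witness_stable:
  assumes "halted_upto e k" "k \<le> k'"
  shows "witness_index e k' = witness_index e k"
    and "witness_index e k \<le> 2 * e \<Longrightarrow> witness_value e k' = witness_value e k"
proof -
  have "2 * e < i \<or> large_even_value e k' i \<longleftrightarrow> 2 * e < i \<or> large_even_value e k i" for i
    using halted_upto_stable(2)[OF assms, of i] unfolding large_even_value_def by auto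
  then show index: "witness_index e k' = witness_index e k" unfolding witness_index_def by simp
  show "witness_index e k \<le> 2 * e \<Longrightarrow> witness_value e k' = witness_value e k"
    unfolding witness_value_def index using halted_upto_stable(2)[OF assms] by simp
qed

lemma split_schedule_diag_split: "split_schedule diag_split"
  unfolding split_schedule_def
proof (intro conjI allI impI)
  fix j k k' assume "diag_split j k" "k \<le> k'"
  then show "diag_split j k'"
    unfolding diag_split_def using halted_upto_stable witness_stable by (metis order.strict_trans2)
qed (simp add: diag_split_def)

lemma ex_le_iff_Least: "(\<exists>e \<le> (B::nat). Q e) \<longleftrightarrow> (LEAST e. B < e \<or> Q e) \<le> B"
proof
  assume "\<exists>e \<le> B. Q e"
  then obtain e where "e \<le> B" "Q e" by blast
  then show "(LEAST e. B < e \<or> Q e) \<le> B" using Least_le[of "\<lambda>e. B < e \<or> Q e" e] by simp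
next
  assume "(LEAST e. B < e \<or> Q e) \<le> B"
  moreover have "B < (LEAST e. B < e \<or> Q e) \<or> Q (LEAST e. B < e \<or> Q e)"
    by (rule LeastI[of _ "Suc B"]) simp
  ultimately show "\<exists>e \<le> B. Q e" by auto
qed

lemma all_le_iff_Least: "(\<forall>e \<le> (B::nat). Q e) \<longleftrightarrow> \<not> (LEAST e. B < e \<or> \<not> Q e) \<le> B"
  using ex_le_iff_Least[of B "\<lambda>e. \<not> Q e"] by auto

lemma decidable_diag_split: "decidable (\<lambda>z. diag_split (nfst z) (nsnd z))"
proof -
  have "decidable (\<lambda>z. 0 < nsnd z \<and> (LEAST e. nfst z div 2 < e \<or>
      (\<not> (LEAST i. 2 * e < i \<or> \<not> halted (run e i (nsnd z))) \<le> 2 * e \<and>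
       witness_index e (nsnd z) \<le> 2 * e \<and> witness_value e (nsnd z) = nfst z)) \<le> nfst z div 2)"
    unfolding halted_def witness_index_def witness_value_def large_even_value_def ret_value_def
      run_def call_state_def ncons_def
    by (intro computable_intros computable_step) auto
  then show ?thesis unfolding diag_split_def halted_upto_def
    by (simp only: all_le_iff_Least[symmetric] ex_le_iff_Least[symmetric] not_not) simp
qed

lemma infinite_unsplit_diag: "infinite {j. \<not> (\<exists>k. diag_split j k)}"
proof
  assume "finite {j. \<not> (\<exists>k. diag_split j k)}"
  then obtain M where "\<forall>j \<in> {j. \<not> (\<exists>k. diag_split j k)}. j < M"
    using finite_nat_set_iff_bounded by blast
  then have M: "\<exists>k. diag_split j k" if "M \<le> j" for j
    using that by force
  define splitter where "splitter j =
    (SOME e. \<exists>k. e \<le> j div 2 \<and> halted_upto e k \<and> witness_index e k \<le> 2 * e \<and> witness_value e k = j)"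
    for j
  have splitter: "\<exists>k. splitter j \<le> j div 2 \<and> halted_upto (splitter j) k
      \<and> witness_index (splitter j) k \<le> 2 * splitter j \<and> witness_value (splitter j) k = j"
    if "M \<le> j" for j
  proof -
    have "\<exists>e k. e \<le> j div 2 \<and> halted_upto e k \<and> witness_index e k \<le> 2 * e \<and> witness_value e k = j"
      using M[OF that] unfolding diag_split_def by blast
    then show ?thesis unfolding splitter_def by (rule someI_ex)
  qed
  have "inj_on splitter {M..<2 * M + 2}"
  proof (rule inj_onI)
    fix j j' assume "j \<in> {M..<2 * M + 2}" "j' \<in> {M..<2 * M + 2}" "splitter j = splitter j'"
    then obtain e k k' where k: "halted_upto e k" "witness_index e k \<le> 2 * e" "witness_value e k = j"
      and k': "halted_upto e k'" "witness_index e k' \<le> 2 * e" "witness_value e k' = j'"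
      using splitter[of j] splitter[of j'] by auto
    have "witness_value e (max k k') = j" using witness_stable(2)[OF k(1), of "max k k'"] k by simp
    moreover have "witness_value e (max k k') = j'" using witness_stable(2)[OF k'(1), of "max k k'"] k' by simp
    ultimately show "j = j'" by simp
  qed
  moreover have "splitter ` {M..<2 * M + 2} \<subseteq> {..M}"
  proof
    fix e assume "e \<in> splitter ` {M..<2 * M + 2}"
    then obtain j where "j \<in> {M..<2 * M + 2}" "e = splitter j" by blast
    then show "e \<in> {..M}" using splitter[of j] by auto
  qed
  ultimately have "card {M..<2 * M + 2} \<le> card {..M}" by (intro card_inj_on_le) simp_all
  then show False by simp
qed

lemma diag_struct_tail_structure: "tail_structure diag_struct"
  by (rule split_struct_tail_structure[OF split_schedule_diag_split infinite_unsplit_diag])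

lemma unsplit_struct_tail_structure: "tail_structure unsplit_struct"
  by (rule split_struct_tail_structure[OF split_schedule_False]) simp

lemma inj_on_atMost_large_value:
  fixes F :: "nat \<Rightarrow> nat"
  assumes "inj_on F {..n}" shows "\<exists>i \<le> n. n \<le> F i"
proof (rule ccontr)
  assume "\<not> (\<exists>i \<le> n. n \<le> F i)"
  then have "F ` {..n} \<subseteq> {..<n}" by auto
  with assms have "card {..n} \<le> card {..<n}" by (intro card_inj_on_le) simp_all
  then show False by simp
qed

lemma computable_runs_halt_together:
  assumes "\<And>x. eval c [x] (h x)"
  obtains K where "\<And>i. i \<le> B \<Longrightarrow> run (prog_code c) i K = ret_state (h (2 * i)) 0"
proof -
  define N where "N i = (SOME n. (step ^^ n) (call_state (prog_code c) (ncons (2 * i) 0) 0)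
      = ret_state (h (2 * i)) 0)" for i
  have N: "(step ^^ N i) (call_state (prog_code c) (ncons (2 * i) 0) 0) = ret_state (h (2 * i)) 0" for i
    unfolding N_def by (rule someI_ex[OF eval_imp_halts[OF assms]])
  show ?thesis
  proof (rule that)
    fix i assume "i \<le> B"
    then have "N i \<le> Max (N ` {..B})" by (intro Max_ge) auto
    then show "run (prog_code c) i (Max (N ` {..B})) = ret_state (h (2 * i)) 0"
      unfolding run_def by (rule halted_stable[OF N])
  qed
qed

theorem no_computable_iso_unsplit_diag: "\<not> (\<exists>h. computable h \<and> struct_iso unsplit_struct diag_struct h)"
proof
  assume "\<exists>h. computable h \<and> struct_iso unsplit_struct diag_struct h"
  then obtain h c where c: "\<And>x. eval c [x] (h x)" and iso: "struct_iso unsplit_struct diag_struct h"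
    unfolding computable_def by blast
  define e where "e = prog_code c"
  define j where "j i = h (2 * i) div 2" for i
  have "bare_fixpoint diag_struct (h (2 * i))" for i
    by (rule struct_iso_bare_fixpoint[OF iso])
      (simp add: bare_fixpoint_split_struct_iff[OF split_schedule_False])
  then have bare: "\<exists>j'. h (2 * i) = 2 * j' \<and> \<not> (\<exists>k. diag_split j' k)" for i
    unfolding bare_fixpoint_split_struct_iff[OF split_schedule_diag_split] by blast
  have h_even: "h (2 * i) = 2 * j i" and unsplit: "\<not> diag_split (j i) k" for i k
    using bare[of i] unfolding j_def by auto
  obtain K where K: "\<And>i. i \<le> 2 * e \<Longrightarrow> run e i K = ret_state (h (2 * i)) 0"
    unfolding e_def using computable_runs_halt_together[OF c] by blast
  then have halted: "halted_upto e K" unfolding halted_upto_def by simp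
  have large: "large_even_value e K i \<longleftrightarrow> 2 * e \<le> j i" if "i \<le> 2 * e" for i
    unfolding large_even_value_def using K[OF that] h_even by simp
  have "inj h" using iso unfolding struct_iso_def bij_def by blast
  then have "inj_on j {..2 * e}"
  proof (intro inj_onI)
    fix a b assume "j a = j b"
    then have "h (2 * a) = h (2 * b)" by (simp add: h_even)
    with \<open>inj h\<close> show "a = b" by (simp add: inj_eq)
  qed
  then obtain i where i: "i \<le> 2 * e" "2 * e \<le> j i" using inj_on_atMost_large_value by blast
  let ?w = "witness_index e K"
  have "?w \<le> i" unfolding witness_index_def by (rule Least_le) (simp add: large i)
  moreover have "2 * e < ?w \<or> large_even_value e K ?w"
    unfolding witness_index_def by (rule LeastI[of _ i]) (simp add: large i)
  ultimately have "?w \<le> 2 * e" "2 * e \<le> j ?w" using i large[of ?w] by auto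
  moreover have "witness_value e K = j ?w"
    unfolding witness_value_def j_def using K[of ?w] \<open>?w \<le> 2 * e\<close> by simp
  ultimately have "diag_split (j ?w) (Suc K)"
    using halted witness_stable[OF halted, of "Suc K"] halted_upto_stable[OF halted, of "Suc K"]
    unfolding diag_split_def by (intro conjI exI[of _ e]) auto
  with unsplit show False by blast
qed

theorem proposition3p3:
  shows "\<exists>f. is_21_1 f \<and> computable f \<and> no_Z_chains f \<and>
    computable (branching f) \<and> computable_on (Lambda f) (iso_fun f) \<and>
    (\<exists>g. is_21_1 g \<and> computable g \<and> (\<exists>h. struct_iso f g h) \<and>
         \<not> (\<exists>h. computable h \<and> struct_iso f g h))"
proof (rule exI[of _ unsplit_struct], intro conjI)
  show "is_21_1 unsplit_struct" by (rule split_struct_is_21_1[OF split_schedule_False])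
  show "computable unsplit_struct" by (intro computable_split_struct computable_intros)
  show "no_Z_chains unsplit_struct" by (rule split_struct_no_Z_chains[OF split_schedule_False])
  show "computable (branching unsplit_struct)" by (rule computable_branching_unsplit_struct)
  show "computable_on (Lambda unsplit_struct) (iso_fun unsplit_struct)"
    by (rule computable_on_iso_fun_unsplit_struct)
  show "\<exists>g. is_21_1 g \<and> computable g \<and> (\<exists>h. struct_iso unsplit_struct g h) \<and>
      \<not> (\<exists>h. computable h \<and> struct_iso unsplit_struct g h)"
  proof (rule exI[of _ diag_struct], intro conjI)
    show "is_21_1 diag_struct" by (rule split_struct_is_21_1[OF split_schedule_diag_split])
    show "computable diag_struct" by (rule computable_split_struct[OF decidable_diag_split])
    show "\<exists>h. struct_iso unsplit_struct diag_struct h"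
      by (rule tail_structures_isomorphic[OF unsplit_struct_tail_structure diag_struct_tail_structure])
    show "\<not> (\<exists>h. computable h \<and> struct_iso unsplit_struct diag_struct h)"
      by (rule no_computable_iso_unsplit_diag)
  qed
qed

end
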